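(* For every $d\in\mathbf{N}I$, the characteristic function $\chi_d$ of $R_d$ belongs to the composition algebra $\mathcal{C}$.
   Context: $Q$ is a finite quiver without oriented cycles with vertex set $I$, $r_{ij}$ arrows $i\to j$, Euler form $\langle i,j\rangle=\delta_{ij}-r_{ij}$. $\mathbf{k}$ is a finite field with $v^2$ elements. $\mathcal{H}=\bigoplus_{d\in\mathbf NI}\mathcal{H}_d$ is the Hall algebra: $\mathcal{H}_d$ is the space of $G_d$-invariant functions $R_d\to\mathbf{C}$ on the set $R_d$ of representations of dimension type $d$ (invariant under $G_d=\prod_i\mathrm{GL}_{d_i}(\mathbf k)$), with product $(f*g)(X)=v^{\langle e,d\rangle}\sum_{U\subseteq X}f(U)g(X/U)$ for $f\in\mathcal{H}_d,g\in\mathcal{H}_e$ (sum over subrepresentations; $f(U)=0$ if $\underline{\dim}U\ne d$). $\chi_d\in\mathcal H_d$ is the constant function $1$ on $R_d$. $\mathcal{C}$ is the $\mathbf{C}$-subalgebra of $\mathcal{H}$ generated by the $\chi_i$, $i\in I$ (here $i$ is viewed as the dimension type with $1$ at $i$ and $0$ elsewhere). *)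

theory Defs
  imports Complex_Main
begin

text \<open>
The quiver has vertex type 'i (finite), with r i j arrows i -> j,
indexed by m < r i j.  The base field is a finite field 'k; v = sqrt |k|.
Vectors of k^n are functions nat => 'k vanishing outside {..<n};
an (m x n)-matrix is a function nat => nat => 'k vanishing outside {..<m} x {..<n}.
A representation of dimension type d assigns to the m-th arrow i -> j a
(d j x d i)-matrix.
\<close>

type_synonym 'k vect = "nat \<Rightarrow> 'k"
type_synonym 'k matr = "nat \<Rightarrow> nat \<Rightarrow> 'k"
type_synonym ('i,'k) rep = "'i \<Rightarrow> 'i \<Rightarrow> nat \<Rightarrow> 'k matr"
type_synonym ('i,'k) hall = "('i \<Rightarrow> nat) \<Rightarrow> ('i,'k) rep \<Rightarrow> complex"

definition vecs :: "nat \<Rightarrow> ('k::field) vect set" where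
  "vecs n = {x. \<forall>p\<ge>n. x p = 0}"

definition mats :: "nat \<Rightarrow> nat \<Rightarrow> ('k::field) matr set" where
  "mats m n = {A. \<forall>p q. (m \<le> p \<or> n \<le> q) \<longrightarrow> A p q = 0}"

definition mv :: "nat \<Rightarrow> ('k::field) matr \<Rightarrow> 'k vect \<Rightarrow> 'k vect" where
  "mv n A x = (\<lambda>p. \<Sum>q<n. A p q * x q)"

definition mm :: "nat \<Rightarrow> ('k::field) matr \<Rightarrow> 'k matr \<Rightarrow> 'k matr" where
  "mm n A B = (\<lambda>p s. \<Sum>q<n. A p q * B q s)"

definition idm :: "nat \<Rightarrow> ('k::field) matr" where
  "idm n = (\<lambda>p q. if p = q \<and> p < n then 1 else 0)"

definition reps :: "('i \<Rightarrow> 'i \<Rightarrow> nat) \<Rightarrow> ('i \<Rightarrow> nat) \<Rightarrow> ('i,'k::field) rep set" where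
  "reps r d = {X. \<forall>i j m. X i j m \<in> mats (d j) (d i) \<and> (r i j \<le> m \<longrightarrow> X i j m = (\<lambda>_ _. 0))}"

definition GLd :: "('i \<Rightarrow> nat) \<Rightarrow> ('i \<Rightarrow> ('k::field) matr) set" where
  "GLd d = {g. \<forall>i. g i \<in> mats (d i) (d i) \<and>
      (\<exists>h \<in> mats (d i) (d i). mm (d i) (g i) h = idm (d i) \<and> mm (d i) h (g i) = idm (d i))}"

text \<open>Y = g . X, i.e. Y_a = g_j X_a g_i^{-1} for every arrow a : i -> j.\<close>
definition acts :: "('i \<Rightarrow> 'i \<Rightarrow> nat) \<Rightarrow> ('i \<Rightarrow> nat) \<Rightarrow> ('i \<Rightarrow> ('k::field) matr)
     \<Rightarrow> ('i,'k) rep \<Rightarrow> ('i,'k) rep \<Rightarrow> bool" where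
  "acts r d g X Y \<longleftrightarrow> (\<forall>i j m. m < r i j \<longrightarrow>
      mm (d i) (Y i j m) (g i) = mm (d j) (g j) (X i j m))"

definition invariant :: "('i \<Rightarrow> 'i \<Rightarrow> nat) \<Rightarrow> ('i \<Rightarrow> nat) \<Rightarrow> (('i,'k::field) rep \<Rightarrow> complex) \<Rightarrow> bool" where
  "invariant r d f \<longleftrightarrow> (\<forall>X\<in>reps r d. \<forall>Y\<in>reps r d. \<forall>g\<in>GLd d. acts r d g X Y \<longrightarrow> f Y = f X)"

definition hall_alg :: "('i \<Rightarrow> 'i \<Rightarrow> nat) \<Rightarrow> ('i,'k::field) hall set" where
  "hall_alg r = {h. finite {d. h d \<noteq> (\<lambda>_. 0)} \<and>
      (\<forall>d. invariant r d (h d) \<and> (\<forall>X. X \<notin> reps r d \<longrightarrow> h d X = 0))}"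

definition subsp :: "nat \<Rightarrow> ('k::field) vect set \<Rightarrow> bool" where
  "subsp n U \<longleftrightarrow> U \<subseteq> vecs n \<and> (\<lambda>_. 0) \<in> U \<and> (\<forall>x\<in>U. \<forall>y\<in>U. (\<lambda>p. x p + y p) \<in> U)
      \<and> (\<forall>c. \<forall>x\<in>U. (\<lambda>p. c * x p) \<in> U)"

definition subreps :: "('i \<Rightarrow> 'i \<Rightarrow> nat) \<Rightarrow> ('i \<Rightarrow> nat) \<Rightarrow> ('i,'k::field) rep \<Rightarrow> ('i \<Rightarrow> 'k vect set) set" where
  "subreps r d X = {U. (\<forall>i. subsp (d i) (U i)) \<and>
      (\<forall>i j m x. m < r i j \<longrightarrow> x \<in> U i \<longrightarrow> mv (d i) (X i j m) x \<in> U j)}"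

definition is_sub :: "('i \<Rightarrow> 'i \<Rightarrow> nat) \<Rightarrow> ('i \<Rightarrow> nat) \<Rightarrow> ('i \<Rightarrow> nat) \<Rightarrow> ('i,'k::field) rep
     \<Rightarrow> ('i \<Rightarrow> 'k vect set) \<Rightarrow> ('i,'k) rep \<Rightarrow> bool" where
  "is_sub r d e X U Y \<longleftrightarrow> (\<exists>\<phi>. (\<forall>i. \<phi> i \<in> mats (d i) (e i)
       \<and> inj_on (mv (e i) (\<phi> i)) (vecs (e i)) \<and> mv (e i) (\<phi> i) ` vecs (e i) = U i)
     \<and> (\<forall>i j m. m < r i j \<longrightarrow> mm (e j) (\<phi> j) (Y i j m) = mm (d i) (X i j m) (\<phi> i)))"

definition is_quot :: "('i \<Rightarrow> 'i \<Rightarrow> nat) \<Rightarrow> ('i \<Rightarrow> nat) \<Rightarrow> ('i \<Rightarrow> nat) \<Rightarrow> ('i,'k::field) rep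
     \<Rightarrow> ('i \<Rightarrow> 'k vect set) \<Rightarrow> ('i,'k) rep \<Rightarrow> bool" where
  "is_quot r d e X U Y \<longleftrightarrow> (\<exists>\<psi>. (\<forall>i. \<psi> i \<in> mats (e i) (d i)
       \<and> mv (d i) (\<psi> i) ` vecs (d i) = vecs (e i)
       \<and> {x \<in> vecs (d i). mv (d i) (\<psi> i) x = (\<lambda>_. 0)} = U i)
     \<and> (\<forall>i j m. m < r i j \<longrightarrow> mm (d j) (\<psi> j) (X i j m) = mm (e i) (Y i j m) (\<psi> i)))"

text \<open>f(U) and g(X/U) for f \<in> H_e (zero if the dimension type does not match);
  well defined by G-invariance.\<close>
definition sub_val :: "('i \<Rightarrow> 'i \<Rightarrow> nat) \<Rightarrow> ('i \<Rightarrow> nat) \<Rightarrow> ('i \<Rightarrow> nat) \<Rightarrow> (('i,'k::field) rep \<Rightarrow> complex)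
     \<Rightarrow> ('i,'k) rep \<Rightarrow> ('i \<Rightarrow> 'k vect set) \<Rightarrow> complex" where
  "sub_val r d e f X U = (if \<exists>Y\<in>reps r e. is_sub r d e X U Y
      then f (SOME Y. Y \<in> reps r e \<and> is_sub r d e X U Y) else 0)"

definition quot_val :: "('i \<Rightarrow> 'i \<Rightarrow> nat) \<Rightarrow> ('i \<Rightarrow> nat) \<Rightarrow> ('i \<Rightarrow> nat) \<Rightarrow> (('i,'k::field) rep \<Rightarrow> complex)
     \<Rightarrow> ('i,'k) rep \<Rightarrow> ('i \<Rightarrow> 'k vect set) \<Rightarrow> complex" where
  "quot_val r d e f X U = (if \<exists>Y\<in>reps r e. is_quot r d e X U Y
      then f (SOME Y. Y \<in> reps r e \<and> is_quot r d e X U Y) else 0)"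

definition euler :: "('i::finite \<Rightarrow> 'i \<Rightarrow> nat) \<Rightarrow> ('i \<Rightarrow> nat) \<Rightarrow> ('i \<Rightarrow> nat) \<Rightarrow> int" where
  "euler r a b = (\<Sum>i\<in>UNIV. int (a i * b i)) - (\<Sum>i\<in>UNIV. \<Sum>j\<in>UNIV. int (r i j * a i * b j))"

definition vq :: "'k::{finite,field} itself \<Rightarrow> complex" where
  "vq _ = complex_of_real (sqrt (real (card (UNIV :: 'k set))))"

definition hall_mult :: "('i::finite \<Rightarrow> 'i \<Rightarrow> nat) \<Rightarrow> ('i,'k::{finite,field}) hall \<Rightarrow> ('i,'k) hall \<Rightarrow> ('i,'k) hall" where
  "hall_mult r f g = (\<lambda>c X. if X \<in> reps r c then
      (\<Sum>d\<in>{d. \<forall>i. d i \<le> c i}. vq TYPE('k) powi (euler r (\<lambda>i. c i - d i) d) *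
         (\<Sum>U\<in>subreps r c X. sub_val r c d (f d) X U * quot_val r c (\<lambda>i. c i - d i) (g (\<lambda>i. c i - d i)) X U))
    else 0)"

definition chi :: "('i \<Rightarrow> 'i \<Rightarrow> nat) \<Rightarrow> ('i \<Rightarrow> nat) \<Rightarrow> ('i,'k::field) hall" where
  "chi r d = (\<lambda>c X. if c = d \<and> X \<in> reps r d then 1 else 0)"

definition simple_dim :: "'i \<Rightarrow> 'i \<Rightarrow> nat" where
  "simple_dim i = (\<lambda>j. if j = i then 1 else 0)"

inductive_set comp_alg :: "('i::finite \<Rightarrow> 'i \<Rightarrow> nat) \<Rightarrow> ('i,'k::{finite,field}) hall set"
  for r where
  unit: "chi r (\<lambda>_. 0) \<in> comp_alg r"
| gen: "chi r (simple_dim i) \<in> comp_alg r"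
| add: "f \<in> comp_alg r \<Longrightarrow> g \<in> comp_alg r \<Longrightarrow> (\<lambda>c X. f c X + g c X) \<in> comp_alg r"
| smult: "f \<in> comp_alg r \<Longrightarrow> (\<lambda>c X. a * f c X) \<in> comp_alg r"
| mult: "f \<in> comp_alg r \<Longrightarrow> g \<in> comp_alg r \<Longrightarrow> hall_mult r f g \<in> comp_alg r"

end

theory Submission
  imports Defs "HOL-Library.FuncSet"
begin

text \<open>
  Induct on the support of \<open>d\<close>.  As \<open>Q\<close> has no oriented cycles, the support contains a
  vertex \<open>s\<close> from which no arrow leads back into the support.  Then every \<open>X \<in> R\<^sub>d\<close> has
  exactly one subrepresentation of dimension \<open>d\<^sub>s s\<close>, namely the whole space at \<open>s\<close>, and
  the quotient by it has dimension \<open>d - d\<^sub>s s\<close>; so \<open>\<chi>\<^bsub>d\<^sub>s s\<^esub> * \<chi>\<^bsub>d - d\<^sub>s s\<^esub>\<close>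
  is a nonzero multiple of \<open>\<chi>\<^sub>d\<close>.  At the loop-free vertex \<open>s\<close> the variety \<open>R\<^bsub>n s\<^esub>\<close>
  is a point, and \<open>\<chi>\<^bsub>n s\<^esub> * \<chi>\<^sub>s\<close> is a positive multiple of \<open>\<chi>\<^bsub>(n+1) s\<^esub>\<close>, the
  factor counting the \<open>n\<close>-dimensional subspaces of \<open>k\<^bsup>n+1\<^esup>\<close>.  Dimension vectors
  \<open>n s\<close> are written \<open>(\<lambda>_. 0)(s := n)\<close>.
\<close>

lemma finite_vecs: "finite (vecs n :: ('k::{finite,field}) vect set)"
proof -
  have "vecs n = {x :: 'k vect. \<forall>p. (p \<in> {..<n} \<longrightarrow> x p \<in> UNIV) \<and> (p \<notin> {..<n} \<longrightarrow> x p = 0)}"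
    by (auto simp: vecs_def)
  then show ?thesis
    using finite_set_of_finite_funs[of "{..<n}" "UNIV :: 'k set" 0] by simp
qed

lemma vecs_0: "vecs 0 = {\<lambda>_. 0}"
  by (auto simp: vecs_def)

lemma zero_in_vecs [simp]: "(\<lambda>_. 0) \<in> vecs n"
  by (simp add: vecs_def)

lemma vecs_not_empty [simp]: "vecs n \<noteq> {}"
  using zero_in_vecs by blast

lemma zero_in_mats [simp]: "(\<lambda>_ _. 0) \<in> mats m n"
  by (simp add: mats_def)

lemma mats_0_rows: "A \<in> mats 0 n \<Longrightarrow> A = (\<lambda>_ _. 0)"
  by (auto simp: mats_def)

lemma mats_0_cols: "A \<in> mats m 0 \<Longrightarrow> A = (\<lambda>_ _. 0)"
  by (auto simp: mats_def)

lemma mv_in_vecs: "A \<in> mats m n \<Longrightarrow> mv n A x \<in> vecs m"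
  by (simp add: mv_def mats_def vecs_def)

lemma mv_0: "mv 0 A x = (\<lambda>_. 0)"
  by (simp add: mv_def)

lemma mv_zero_mat [simp]: "mv n (\<lambda>_ _. 0) x = (\<lambda>_. 0)"
  by (simp add: mv_def)

lemma mv_zero_vec [simp]: "mv n A (\<lambda>_. 0) = (\<lambda>_. 0)"
  by (simp add: mv_def)

lemma mm_zero_left [simp]: "mm n (\<lambda>_ _. 0) B = (\<lambda>_ _. 0)"
  by (simp add: mm_def)

lemma mm_zero_right [simp]: "mm n A (\<lambda>_ _. 0) = (\<lambda>_ _. 0)"
  by (simp add: mm_def)

lemma sum_idm_mult: "(\<Sum>q<n. idm n p q * (f q :: 'k::field)) = (if p < n then f p else 0)"
proof -
  have "(\<Sum>q<n. idm n p q * f q) = (\<Sum>q<n. if q = p then (if p < n then f q else 0) else 0)"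
    by (rule sum.cong) (auto simp: idm_def)
  then show ?thesis by simp
qed

lemma sum_mult_idm: "(\<Sum>q<n. (f q :: 'k::field) * idm n q s) = (if s < n then f s else 0)"
proof -
  have "(\<Sum>q<n. f q * idm n q s) = (\<Sum>q<n. if q = s then (if s < n then f q else 0) else 0)"
    by (rule sum.cong) (auto simp: idm_def)
  then show ?thesis by simp
qed

lemma idm_in_mats: "k \<le> m \<Longrightarrow> idm k \<in> mats m k"
  by (auto simp: idm_def mats_def)

lemma mv_idm: "x \<in> vecs n \<Longrightarrow> mv n (idm n) x = x"
  by (auto simp: mv_def sum_idm_mult vecs_def)

lemma inj_on_mv_idm: "inj_on (mv n (idm n)) (vecs n)"
  by (rule inj_onI) (simp add: mv_idm)

lemma image_mv_idm: "mv n (idm n) ` vecs n = vecs n"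
  by (simp add: mv_idm)

lemma mm_idm_left: "A \<in> mats m n \<Longrightarrow> mm m (idm m) A = A"
  by (auto simp: mm_def sum_idm_mult mats_def fun_eq_iff)

lemma mm_idm_right: "A \<in> mats m n \<Longrightarrow> mm n A (idm n) = A"
  by (auto simp: mm_def sum_mult_idm mats_def fun_eq_iff)

lemma zero_in_reps [simp]: "(\<lambda>_ _ _ _ _. 0) \<in> reps r d"
  by (simp add: reps_def)

lemma reps_in_mats: "X \<in> reps r d \<Longrightarrow> X i j m \<in> mats (d j) (d i)"
  by (simp add: reps_def)

lemma reps_eq_zero_beyond_arrows: "X \<in> reps r d \<Longrightarrow> r i j \<le> m \<Longrightarrow> X i j m = (\<lambda>_ _. 0)"
  by (simp add: reps_def)

lemma reps_eq_zero_if_no_arrows: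
  assumes "\<And>i j. 0 < r i j \<Longrightarrow> d i = 0 \<or> d j = 0"
  shows "reps r d = {\<lambda>_ _ _ _ _. 0}"
proof -
  have "X i j m = (\<lambda>_ _. 0)" if X: "X \<in> reps r d" for X i j m
  proof (cases "m < r i j")
    case True
    then have "d i = 0 \<or> d j = 0"
      using assms by simp
    then show ?thesis
      using reps_in_mats[OF X, of i j m] mats_0_rows mats_0_cols by metis
  qed (simp add: reps_eq_zero_beyond_arrows[OF X])
  then show ?thesis
    by (fastforce simp: fun_eq_iff)
qed

lemma finite_subreps: "finite (subreps r d X :: ('i::finite \<Rightarrow> ('k::{finite,field}) vect set) set)"
proof (rule finite_subset)
  show "subreps r d X \<subseteq> Pi\<^sub>E UNIV (\<lambda>i. Pow (vecs (d i)))"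
    by (auto simp: subreps_def subsp_def PiE_UNIV_domain)
  show "finite (Pi\<^sub>E (UNIV::'i set) (\<lambda>i. Pow (vecs (d i) :: 'k vect set)))"
    by (intro finite_PiE) (auto simp: finite_vecs)
qed

lemma finite_dims_le: "finite {d. \<forall>i. d i \<le> (c :: 'i::finite \<Rightarrow> nat) i}"
proof (rule finite_subset)
  show "{d. \<forall>i. d i \<le> c i} \<subseteq> Pi\<^sub>E UNIV (\<lambda>i. {..c i})"
    by (auto simp: PiE_UNIV_domain)
  show "finite (Pi\<^sub>E (UNIV::'i set) (\<lambda>i. {..c i}))"
    by (intro finite_PiE) auto
qed

lemma vq_nonzero: "vq TYPE('k::{finite,field}) \<noteq> 0"
  by (simp add: vq_def finite_UNIV_card_ge_0)

definition subreps_of_type ::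
    "('i \<Rightarrow> 'i \<Rightarrow> nat) \<Rightarrow> ('i \<Rightarrow> nat) \<Rightarrow> ('i \<Rightarrow> nat) \<Rightarrow> ('i \<Rightarrow> nat) \<Rightarrow> ('i,'k::field) rep
      \<Rightarrow> ('i \<Rightarrow> 'k vect set) set" where
  "subreps_of_type r d e e' X = {U \<in> subreps r d X.
     (\<exists>Y\<in>reps r e. is_sub r d e X U Y) \<and> (\<exists>Y\<in>reps r e'. is_quot r d e' X U Y)}"

lemma finite_subreps_of_type:
  "finite (subreps_of_type r d e e' X :: ('i::finite \<Rightarrow> ('k::{finite,field}) vect set) set)"
  by (simp add: subreps_of_type_def finite_subreps)

lemma sub_val_chi:
  "sub_val r d e (chi r e' e) X U = of_bool (e = e' \<and> (\<exists>Y\<in>reps r e. is_sub r d e X U Y))"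
proof (cases "\<exists>Y\<in>reps r e. is_sub r d e X U Y")
  case True
  then have "\<exists>Y. Y \<in> reps r e \<and> is_sub r d e X U Y" by blast
  from someI_ex[OF this] show ?thesis
    using True by (auto simp: sub_val_def chi_def)
qed (simp add: sub_val_def)

lemma quot_val_chi:
  "quot_val r d e (chi r e' e) X U = of_bool (e = e' \<and> (\<exists>Y\<in>reps r e. is_quot r d e X U Y))"
proof (cases "\<exists>Y\<in>reps r e. is_quot r d e X U Y")
  case True
  then have "\<exists>Y. Y \<in> reps r e \<and> is_quot r d e X U Y" by blast
  from someI_ex[OF this] show ?thesis
    using True by (auto simp: quot_val_def chi_def)
qed (simp add: quot_val_def)

lemma hall_mult_chi_chi:
  fixes e e' c :: "'i::finite \<Rightarrow> nat" and X :: "('i,'k::{finite,field}) rep"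
  shows "hall_mult r (chi r e) (chi r e') c X =
    (if c = (\<lambda>i. e i + e' i) \<and> X \<in> reps r c
     then vq TYPE('k) powi euler r e' e * of_nat (card (subreps_of_type r c e e' X)) else 0)"
proof (cases "X \<in> reps r c")
  case X: True
  define K where "K = vq TYPE('k) powi euler r e' e * of_nat (card (subreps_of_type r c e e' X))"
  have summand: "vq TYPE('k) powi (euler r (\<lambda>i. c i - d i) d) *
      (\<Sum>U\<in>subreps r c X. sub_val r c d (chi r e d) X U *
         quot_val r c (\<lambda>i. c i - d i) (chi r e' (\<lambda>i. c i - d i)) X U)
    = (if d = e then if (\<lambda>i. c i - e i) = e' then K else 0 else 0)" for d
    by (auto simp: K_def sub_val_chi quot_val_chi of_bool_conj[symmetric] subreps_of_type_def finite_subreps Int_def)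
  have "(\<lambda>i. c i - e i) = e' \<and> (\<forall>i. e i \<le> c i) \<longleftrightarrow> c = (\<lambda>i. e i + e' i)"
    by (auto simp: fun_eq_iff) (metis le_add_diff_inverse)
  then show ?thesis
    using X by (auto simp: hall_mult_def summand finite_dims_le K_def)
qed (simp add: hall_mult_def)

lemma chi_add_in_comp_alg:
  fixes e e' d :: "'i::finite \<Rightarrow> nat"
  assumes "(chi r e :: ('i,'k::{finite,field}) hall) \<in> comp_alg r" "(chi r e' :: ('i,'k) hall) \<in> comp_alg r"
    and d: "d = (\<lambda>i. e i + e' i)"
    and count: "\<And>X. X \<in> reps r d \<Longrightarrow> card (subreps_of_type r d e e' (X :: ('i,'k) rep)) = N"
    and "0 < N"
  shows "(chi r d :: ('i,'k) hall) \<in> comp_alg r"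
proof -
  define K where "K = vq TYPE('k) powi euler r e' e * of_nat N"
  have "K \<noteq> 0"
    using vq_nonzero[where 'k='k] \<open>0 < N\<close> by (simp add: K_def)
  have "hall_mult r (chi r e) (chi r e') c X = K * chi r d c X" for c and X :: "('i,'k) rep"
    unfolding hall_mult_chi_chi d[symmetric] by (auto simp: chi_def K_def count)
  then have "(chi r d :: ('i,'k) hall) = (\<lambda>c X. (1 / K) * hall_mult r (chi r e) (chi r e') c X)"
    using \<open>K \<noteq> 0\<close> by (simp add: fun_eq_iff)
  also have "\<dots> \<in> comp_alg r"
    by (intro comp_alg.smult comp_alg.mult assms(1,2))
  finally show ?thesis .
qed

lemma coordinate_subspace_in_subreps:
  assumes "k \<le> d s" and "\<And>j m. m < r s j \<Longrightarrow> X s j m = (\<lambda>_ _. 0)"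
  shows "(\<lambda>_. {\<lambda>_. 0})(s := vecs k) \<in> subreps r d X"
  using assms by (auto simp: subreps_def subsp_def vecs_def)

lemma is_sub_coordinate_subspace:
  assumes "k \<le> d s" and "\<And>j m. m < r s j \<Longrightarrow> X s j m = (\<lambda>_ _. 0)"
  shows "is_sub r d ((\<lambda>_. 0)(s := k)) X ((\<lambda>_. {\<lambda>_. 0})(s := vecs k)) (\<lambda>_ _ _ _ _. 0)"
  unfolding is_sub_def
proof (intro exI[where x="(\<lambda>_ _ _. 0)(s := idm k)"] conjI allI impI)
  fix i
  show "((\<lambda>_ _ _. 0)(s := idm k)) i \<in> mats (d i) (((\<lambda>_. 0)(s := k)) i)"
    using assms(1) by (auto simp: idm_in_mats)
  show "inj_on (mv (((\<lambda>_. 0)(s := k)) i) (((\<lambda>_ _ _. 0)(s := idm k)) i)) (vecs (((\<lambda>_. 0)(s := k)) i))"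
    by (auto simp: inj_on_mv_idm vecs_0)
  show "mv (((\<lambda>_. 0)(s := k)) i) (((\<lambda>_ _ _. 0)(s := idm k)) i) ` vecs (((\<lambda>_. 0)(s := k)) i)
      = ((\<lambda>_. {\<lambda>_. 0})(s := vecs k)) i"
    by (auto simp: image_mv_idm vecs_0)
next
  fix i j m
  assume "m < r i j"
  then show "mm (((\<lambda>_. 0)(s := k)) j) (((\<lambda>_ _ _. 0)(s := idm k)) j) (\<lambda>_ _. 0)
      = mm (d i) (X i j m) (((\<lambda>_ _ _. 0)(s := idm k)) i)"
    using assms(2) by auto
qed

lemma is_sub_at_vertex_unique:
  fixes X :: "('i, 'k::{finite,field}) rep"
  assumes "is_sub r d ((\<lambda>_. 0)(s := d s)) X U Y"
  shows "U = (\<lambda>_. {\<lambda>_. 0})(s := vecs (d s))"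
proof -
  obtain \<phi> where \<phi>: "\<And>i. \<phi> i \<in> mats (d i) (((\<lambda>_. 0)(s := d s)) i)
      \<and> inj_on (mv (((\<lambda>_. 0)(s := d s)) i) (\<phi> i)) (vecs (((\<lambda>_. 0)(s := d s)) i))
      \<and> mv (((\<lambda>_. 0)(s := d s)) i) (\<phi> i) ` vecs (((\<lambda>_. 0)(s := d s)) i) = U i"
    using assms unfolding is_sub_def by blast
  have \<phi>_s: "\<phi> s \<in> mats (d s) (d s)" "inj_on (mv (d s) (\<phi> s)) (vecs (d s))"
      "mv (d s) (\<phi> s) ` vecs (d s) = U s"
    using \<phi>[of s] by auto
  have "mv (d s) (\<phi> s) ` vecs (d s) \<subseteq> vecs (d s)"
    using mv_in_vecs[OF \<phi>_s(1)] by blast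
  then have "U s = vecs (d s)"
    using endo_inj_surj[OF finite_vecs _ \<phi>_s(2)] \<phi>_s(3) by simp
  moreover have "U i = {\<lambda>_. 0}" if "i \<noteq> s" for i
    using \<phi>[of i] that by (simp add: vecs_0 mv_0)
  ultimately show ?thesis
    by (auto simp: fun_eq_iff)
qed

lemma is_quot_delete_vertex:
  assumes X: "X \<in> reps r d" and out: "\<And>j m. m < r s j \<Longrightarrow> X s j m = (\<lambda>_ _. 0)"
  shows "\<exists>Y\<in>reps r (d(s := 0)). is_quot r d (d(s := 0)) X ((\<lambda>_. {\<lambda>_. 0})(s := vecs (d s))) Y"
proof
  define Y where "Y = (\<lambda>i j m. if i = s \<or> j = s then (\<lambda>_ _. 0) else X i j m)"
  show "Y \<in> reps r (d(s := 0))"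
    using X by (auto simp: Y_def reps_def)
  show "is_quot r d (d(s := 0)) X ((\<lambda>_. {\<lambda>_. 0})(s := vecs (d s))) Y"
    unfolding is_quot_def
  proof (intro exI[where x="\<lambda>i. if i = s then (\<lambda>_ _. 0) else idm (d i)"] conjI allI impI)
    fix i
    show "(if i = s then (\<lambda>_ _. 0) else idm (d i)) \<in> mats ((d(s := 0)) i) (d i)"
      by (auto simp: idm_in_mats)
    show "mv (d i) (if i = s then (\<lambda>_ _. 0) else idm (d i)) ` vecs (d i) = vecs ((d(s := 0)) i)"
      by (auto simp: image_mv_idm vecs_0 image_constant_conv)
    show "{x \<in> vecs (d i). mv (d i) (if i = s then (\<lambda>_ _. 0) else idm (d i)) x = (\<lambda>_. 0)}
        = ((\<lambda>_. {\<lambda>_. 0})(s := vecs (d s))) i"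
      by (auto simp: mv_idm)
  next
    fix i j m
    assume "m < r i j"
    then show "mm (d j) (if j = s then (\<lambda>_ _. 0) else idm (d j)) (X i j m)
        = mm ((d(s := 0)) i) (Y i j m) (if i = s then (\<lambda>_ _. 0) else idm (d i))"
      using out mm_idm_left[OF reps_in_mats[OF X]] mm_idm_right[OF reps_in_mats[OF X]]
      by (auto simp: Y_def)
  qed
qed

lemma subreps_of_type_at_sink:
  fixes X :: "('i, 'k::{finite,field}) rep"
  assumes "X \<in> reps r d" and "\<And>j m. m < r s j \<Longrightarrow> X s j m = (\<lambda>_ _. 0)"
  shows "subreps_of_type r d ((\<lambda>_. 0)(s := d s)) (d(s := 0)) X = {(\<lambda>_. {\<lambda>_. 0})(s := vecs (d s))}"
  using assms is_sub_at_vertex_unique coordinate_subspace_in_subreps[of "d s" d s r X]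
    is_sub_coordinate_subspace[of "d s" d s r X] is_quot_delete_vertex[of X r d s]
  by (auto simp: subreps_of_type_def)

lemma is_quot_last_coordinate:
  "is_quot r ((\<lambda>_. 0)(s := Suc n)) (simple_dim s) (\<lambda>_ _ _ _ _. 0)
     ((\<lambda>_. {\<lambda>_. 0})(s := vecs n)) (\<lambda>_ _ _ _ _. 0 :: 'k::field)"
proof -
  define P :: "'k matr" where "P = (\<lambda>p q. if p = 0 \<and> q = n then 1 else 0)"
  have mv_P: "mv (Suc n) P x = (\<lambda>p. if p = 0 then x n else 0)" for x
  proof
    fix p
    have "(\<Sum>q<Suc n. P p q * x q) = (\<Sum>q<Suc n. if q = n then (if p = 0 then x q else 0) else 0)"
      by (rule sum.cong) (auto simp: P_def)
    then show "mv (Suc n) P x p = (if p = 0 then x n else 0)"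
      by (simp add: mv_def)
  qed
  have "P \<in> mats 1 (Suc n)"
    by (auto simp: P_def mats_def)
  moreover have "mv (Suc n) P ` vecs (Suc n) = vecs 1"
  proof (intro subset_antisym subsetI)
    fix y :: "'k vect"
    assume "y \<in> vecs 1"
    then have "y = mv (Suc n) P (\<lambda>p. if p = n then y 0 else 0)"
      by (auto simp: mv_P vecs_def)
    moreover have "(\<lambda>p. if p = n then y 0 else 0) \<in> vecs (Suc n)"
      by (simp add: vecs_def)
    ultimately show "y \<in> mv (Suc n) P ` vecs (Suc n)"
      by (rule image_eqI)
  qed (use \<open>P \<in> mats 1 (Suc n)\<close> mv_in_vecs in blast)
  moreover have "{x \<in> vecs (Suc n). mv (Suc n) P x = (\<lambda>_. 0)} = vecs n"
    by (auto simp: mv_P vecs_def fun_eq_iff) (metis le_antisym not_less_eq_eq)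
  ultimately show ?thesis
    unfolding is_quot_def
    by (intro exI[where x="(\<lambda>_ _ _. 0)(s := P)"]) (auto simp: simple_dim_def vecs_0)
qed

lemma chi_at_vertex_in_comp_alg:
  fixes s :: "'i::finite"
  assumes "r s s = 0"
  shows "(chi r ((\<lambda>_. 0)(s := n)) :: ('i,'k::{finite,field}) hall) \<in> comp_alg r"
proof (induction n)
  case 0
  then show ?case
    using comp_alg.unit by simp
next
  case (Suc n)
  define d :: "'i \<Rightarrow> nat" where "d = (\<lambda>_. 0)(s := Suc n)"
  define Z :: "('i,'k) rep" where "Z = (\<lambda>_ _ _ _ _. 0)"
  have reps_d: "reps r d = {Z}"
    unfolding Z_def using assms by (intro reps_eq_zero_if_no_arrows) (auto simp: d_def)
  have "(\<lambda>_. {\<lambda>_. 0})(s := vecs n) \<in> subreps_of_type r d ((\<lambda>_. 0)(s := n)) (simple_dim s) Z"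
    using coordinate_subspace_in_subreps[of n d s r Z] is_sub_coordinate_subspace[of n d s r Z]
      is_quot_last_coordinate[of r s n]
    by (auto simp: subreps_of_type_def d_def Z_def)
  then have count_pos: "0 < card (subreps_of_type r d ((\<lambda>_. 0)(s := n)) (simple_dim s) Z)"
    using finite_subreps_of_type card_gt_0_iff by blast
  have d_split: "d = (\<lambda>i. ((\<lambda>_. 0)(s := n)) i + simple_dim s i)"
    by (auto simp: d_def simple_dim_def)
  have "(chi r d :: ('i,'k) hall) \<in> comp_alg r"
    by (rule chi_add_in_comp_alg[OF Suc comp_alg.gen d_split _ count_pos]) (simp only: reps_d singleton_iff)
  then show ?case
    by (simp only: d_def)
qed

lemma chi_in_comp_alg_remove_sink:
  fixes d :: "'i::finite \<Rightarrow> nat"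
  assumes s: "0 < d s" and sink: "\<And>j. 0 < d j \<Longrightarrow> r s j = 0"
    and rest: "(chi r (d(s := 0)) :: ('i,'k::{finite,field}) hall) \<in> comp_alg r"
  shows "(chi r d :: ('i,'k) hall) \<in> comp_alg r"
proof (rule chi_add_in_comp_alg[where e = "(\<lambda>_. 0)(s := d s)" and e' = "d(s := 0)" and N = 1])
  show "(chi r ((\<lambda>_. 0)(s := d s)) :: ('i,'k) hall) \<in> comp_alg r"
    using s sink by (intro chi_at_vertex_in_comp_alg) auto
  show "d = (\<lambda>i. ((\<lambda>_. 0)(s := d s)) i + (d(s := 0)) i)"
    by auto
  fix X :: "('i,'k) rep"
  assume X: "X \<in> reps r d"
  have "X s j m = (\<lambda>_ _. 0)" if "m < r s j" for j m
  proof -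
    have "d j = 0"
      using sink[of j] that by (cases "d j") auto
    then show ?thesis
      using reps_in_mats[OF X, of s j m] by (simp add: mats_0_rows)
  qed
  then show "card (subreps_of_type r d ((\<lambda>_. 0)(s := d s)) (d(s := 0)) X) = 1"
    by (simp add: subreps_of_type_at_sink[OF X])
qed (simp_all add: rest)

lemma acyclic_has_sink:
  fixes R :: "('a::finite \<times> 'a) set"
  assumes "acyclic R" and "S \<noteq> {}"
  shows "\<exists>s\<in>S. \<forall>j\<in>S. (s, j) \<notin> R"
proof -
  have "wf (R\<inverse>)"
    using assms(1) by (intro finite_acyclic_wf_converse) auto
  moreover obtain x where "x \<in> S"
    using assms(2) by blast
  ultimately obtain s where "s \<in> S" and "\<forall>j. (j, s) \<in> R\<inverse> \<longrightarrow> j \<notin> S"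
    using wf_eq_minimal[THEN iffD1, rule_format] by metis
  then show ?thesis
    by auto
qed

theorem mainTheorem6:
  fixes r :: "'i::finite \<Rightarrow> 'i \<Rightarrow> nat" and d :: "'i \<Rightarrow> nat"
  assumes "acyclic {(i, j). 0 < r i j}"
  shows "(chi r d :: ('i, 'k::{finite,field}) hall) \<in> comp_alg r"
proof (induction "card {i. 0 < d i}" arbitrary: d rule: less_induct)
  case less
  show ?case
  proof (cases "d = (\<lambda>_. 0)")
    case True
    then show ?thesis
      using comp_alg.unit by simp
  next
    case False
    then have "{i. 0 < d i} \<noteq> {}"
      by (auto simp: fun_eq_iff)
    then obtain s where s: "0 < d s" and sink: "\<And>j. 0 < d j \<Longrightarrow> r s j = 0"
      using acyclic_has_sink[OF assms, of "{i. 0 < d i}"] by auto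
    have "{i. 0 < (d(s := 0)) i} = {i. 0 < d i} - {s}"
      by auto
    then have "card {i. 0 < (d(s := 0)) i} < card {i. 0 < d i}"
      using s by (metis card_Diff1_less finite mem_Collect_eq)
    then have "(chi r (d(s := 0)) :: ('i,'k) hall) \<in> comp_alg r"
      by (rule less)
    with s sink show ?thesis
      by (rule chi_in_comp_alg_remove_sink)
  qed
qed

end
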